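(* Let $a=\{a_1,\dots,a_m\}\subseteq\mathbb{Z}_{\ge 2}$. Then for every $n\ge0$, $$r(\mathcal{A}_n(a))=\sum_{i=0}^n\binom{n}{i}\,r(\widetilde{\mathcal{C}}_i)\,r(\widetilde{\mathcal{C}}_{n-i}).$$
   Context: For a set $a=\{a_1,\dots,a_m\}$ of integers $\ge2$ and $n\ge 1$, $\mathcal{A}_n(a)$ denotes the hyperplane arrangement in $\mathbb{R}^n$ consisting of the hyperplanes $x_i=0$ ($1\le i\le n$), $x_i=x_j$ ($1\le i<j\le n$), and $x_i=a_rx_j$ ($1\le i\neq j\le n$, $1\le r\le m$). $\widetilde{\mathcal{C}}_n$ denotes the arrangement in $\mathbb{R}^n$ consisting of the hyperplanes $x_i-x_j=0$ ($1\le i<j\le n$) and $x_i-x_j=\log a_r/\log a_1$ ($1\le i\neq j\le n$, $1\le r\le m$; for $r=1$ this is $x_i-x_j=1$). For $n=0$ both are empty arrangements in $\mathbb{R}^0$ with one region. $r(\mathcal{A})$ denotes the number of connected components of $\mathbb{R}^n\setminus\bigcup_{H\in\mathcal{A}}H$. *)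

theory Defs
  imports "HOL-Analysis.Analysis"
begin

text \<open>R^n is modelled as the subspace of nat => real (product topology) of functions
vanishing outside {0..<n}; coordinates x_1..x_n are x 0 .. x (n-1).\<close>

definition Rn :: "nat \<Rightarrow> (nat \<Rightarrow> real) set" where
  "Rn n = {x. \<forall>i\<ge>n. x i = 0}"

definition num_regions :: "(nat \<Rightarrow> real) set \<Rightarrow> nat" where
  "num_regions S = card (components S)"

definition A_compl :: "nat list \<Rightarrow> nat \<Rightarrow> (nat \<Rightarrow> real) set" where
  "A_compl a n = {x \<in> Rn n.
      (\<forall>i<n. x i \<noteq> 0) \<and>
      (\<forall>i<n. \<forall>j<n. i < j \<longrightarrow> x i \<noteq> x j) \<and>
      (\<forall>i<n. \<forall>j<n. i \<noteq> j \<longrightarrow> (\<forall>r \<in> set a. x i \<noteq> real r * x j))}"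

definition C_compl :: "nat list \<Rightarrow> nat \<Rightarrow> (nat \<Rightarrow> real) set" where
  "C_compl a n = {x \<in> Rn n.
      (\<forall>i<n. \<forall>j<n. i < j \<longrightarrow> x i - x j \<noteq> 0) \<and>
      (\<forall>i<n. \<forall>j<n. i \<noteq> j \<longrightarrow> (\<forall>r \<in> set a. x i - x j \<noteq> ln (real r) / ln (real (hd a))))}"

end

theory Submission
  imports Defs
begin

text \<open>Fix the set S of coordinates that are positive. On this orthant of the complement of
  A_n(a), the logarithmic chart sending x to (log x_i / log a_1) for i in S and to
  (log (-x_j) / log a_1) for j not in S is a homeomorphism onto the product of the complements
  of C~ on the coordinates in S and on the remaining ones: between coordinates of equal sign,
  x_i = a_r x_j becomes y_i - y_j = log a_r / log a_1, while coordinates of opposite signs never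
  lie on a hyperplane of A_n(a). The orthants are open and partition the complement, the number
  of regions of C~ on an index set depends only on its size, and there are (n choose i)
  orthants with i positive coordinates.\<close>

lemma components_eq_connected_components_of:
  "components S = connected_components_of (top_of_set S)"
proof -
  have "connected_component_of (top_of_set S) x = connected_component S x" for x
    by (auto simp: fun_eq_iff connected_component_of_def connected_component_def connectedin_subtopology)
  then show ?thesis
    by (simp add: components_def connected_components_of_def)
qed

lemma components_homeomorphism:
  assumes "homeomorphism S T f g"
  shows "components T = (image f) ` components S" and "inj_on (image f) (components S)"
proof -
  have "homeomorphic_maps (top_of_set S) (top_of_set T) f g"
    using assms by (auto simp: homeomorphic_maps_def homeomorphism_def)
  then have "homeomorphic_map (top_of_set S) (top_of_set T) f"
    using homeomorphic_map_maps by blast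
  then show "components T = (image f) ` components S"
    by (simp add: components_eq_connected_components_of homeomorphic_map_connected_components_of)
  have "inj_on f S"
    using assms by (metis homeomorphism_def inj_on_inverseI)
  then show "inj_on (image f) (components S)"
    using inj_on_image[of f "components S"] by simp
qed

lemma homeomorphic_components:
  assumes "S homeomorphic T"
  shows "card (components S) = card (components T)"
    and "finite (components S) \<longleftrightarrow> finite (components T)"
proof -
  obtain f g where "homeomorphism S T f g"
    using assms homeomorphic_def by blast
  then show "card (components S) = card (components T)"
    and "finite (components S) \<longleftrightarrow> finite (components T)"
    using components_homeomorphism card_image finite_image_iff by metis+
qed

lemma components_Times:
  "components (S \<times> T) = (\<lambda>(C, D). C \<times> D) ` (components S \<times> components T)"
proof -
  have "top_of_set (S \<times> T) = prod_topology (top_of_set S) (top_of_set T)"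
    using subtopology_Times[of euclidean euclidean S T] by (simp only: prod_topology_euclidean)
  moreover have "{C \<times> D |C D. C \<in> A \<and> D \<in> B} = (\<lambda>(C, D). C \<times> D) ` (A \<times> B)"
    for A :: "'a set set" and B :: "'b set set"
    by (auto simp only: image_iff mem_Collect_eq mem_Times_iff split: prod.splits)
  ultimately show ?thesis
    by (simp only: components_eq_connected_components_of connected_components_of_prod_topology)
qed

lemma
  shows card_components_Times: "card (components (S \<times> T)) = card (components S) * card (components T)"
    and finite_components_Times:
      "finite (components S) \<Longrightarrow> finite (components T) \<Longrightarrow> finite (components (S \<times> T))"
proof -
  have "inj_on (\<lambda>(C, D). C \<times> D) (components S \<times> components T)"
    by (rule inj_onI) (auto simp: times_eq_iff dest: in_components_nonempty)
  then show "card (components (S \<times> T)) = card (components S) * card (components T)"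
    by (simp add: components_Times card_image card_cartesian_product)
  show "finite (components S) \<Longrightarrow> finite (components T) \<Longrightarrow> finite (components (S \<times> T))"
    by (simp add: components_Times)
qed

lemma finite_components_Union_connected:
  assumes "finite F" "\<And>X. X \<in> F \<Longrightarrow> connected X"
  shows "finite (components (\<Union>F))"
proof -
  let ?comp = "\<lambda>X. connected_component_set (\<Union>F) (SOME x. x \<in> X)"
  have "components (\<Union>F) \<subseteq> ?comp ` F"
  proof
    fix C assume "C \<in> components (\<Union>F)"
    then obtain x where x: "x \<in> \<Union>F" "C = connected_component_set (\<Union>F) x"
      by (rule componentsE)
    then obtain X where X: "X \<in> F" "x \<in> X"
      by blast
    then have z: "(SOME x. x \<in> X) \<in> X"
      by (meson someI)
    have "connected_component (\<Union>F) x (SOME x. x \<in> X)"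
      using connected_componentI[OF assms(2)[OF X(1)] Union_upper[OF X(1)] X(2) z] .
    then have "C = ?comp X"
      using x(2) connected_component_eq by blast
    then show "C \<in> ?comp ` F"
      using X(1) by blast
  qed
  then show ?thesis
    using assms(1) finite_surj by blast
qed

lemma connected_clopen_subset_cases:
  assumes "openin (top_of_set S) P" "closedin (top_of_set S) P" "connected C" "C \<subseteq> S"
  shows "C \<subseteq> P \<or> C \<inter> P = {}"
  using connectedin_clopen_cases[of "top_of_set S" C P] assms
  by (simp add: connectedin_subtopology disjnt_def)

lemma components_clopen_subset:
  assumes "openin (top_of_set S) P" "closedin (top_of_set S) P"
  shows "components P = {C \<in> components S. C \<subseteq> P}"
proof -
  have PS: "P \<subseteq> S"
    using assms(1) openin_imp_subset by blast
  have "C \<in> components S \<and> C \<subseteq> P" if C: "C \<in> components P" for C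
  proof -
    have "C \<subseteq> S" "C \<noteq> {}" "connected C"
      using C PS in_components_subset in_components_nonempty in_components_connected by blast+
    then obtain D where D: "D \<in> components S" "C \<subseteq> D"
      using exists_component_superset by blast
    then have "D \<subseteq> P"
      using connected_clopen_subset_cases[OF assms in_components_connected in_components_subset]
        \<open>C \<noteq> {}\<close> C in_components_subset by blast
    then have "D \<in> components P"
      using D(1) PS components_intermediate_subset by blast
    then have "C = D"
      using components_eq[OF C] D(2) \<open>C \<noteq> {}\<close> by (simp add: Int_absorb2)
    then show ?thesis
      using D(1) \<open>D \<subseteq> P\<close> by auto
  qed
  moreover have "C \<in> components P" if "C \<in> components S" "C \<subseteq> P" for C
    using that PS components_intermediate_subset by blast
  ultimately show ?thesis
    by blast
qed

lemma card_components_open_partition: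
  assumes "finite J"
    and "\<And>j. j \<in> J \<Longrightarrow> openin (top_of_set S) (P j)"
    and "disjoint_family_on P J" and "S = (\<Union>j\<in>J. P j)"
    and "\<And>j. j \<in> J \<Longrightarrow> finite (components (P j))"
  shows "card (components S) = (\<Sum>j\<in>J. card (components (P j)))"
proof -
  have closed_parts: "closedin (top_of_set S) (P j)" if "j \<in> J" for j
  proof -
    have "S - P j = (\<Union>k\<in>J - {j}. P k)"
      using assms(3,4) that by (auto simp: disjoint_family_on_def)
    then show ?thesis
      using assms(2,4) that by (auto simp: closedin_def intro!: openin_Union)
  qed
  have parts: "components (P j) = {C \<in> components S. C \<subseteq> P j}" if "j \<in> J" for j
    using components_clopen_subset assms(2) closed_parts that by blast
  have "\<exists>j\<in>J. C \<subseteq> P j" if C: "C \<in> components S" for C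
  proof -
    obtain x where "x \<in> C"
      using C in_components_nonempty by blast
    then obtain j where "j \<in> J" "x \<in> P j"
      using C in_components_subset assms(4) by blast
    then have "C \<subseteq> P j"
      using connected_clopen_subset_cases[OF assms(2) closed_parts in_components_connected in_components_subset]
        C \<open>x \<in> C\<close> by blast
    then show ?thesis
      using \<open>j \<in> J\<close> by blast
  qed
  then have "components S \<subseteq> (\<Union>j\<in>J. components (P j))"
    using parts by blast
  moreover have "(\<Union>j\<in>J. components (P j)) \<subseteq> components S"
    using parts by blast
  moreover have "components (P j) \<inter> components (P k) = {}" if "j \<in> J" "k \<in> J" "j \<noteq> k" for j k
  proof -
    have "P j \<inter> P k = {}"
      using assms(3) that by (simp add: disjoint_family_on_def)
    then show ?thesis
      using in_components_subset in_components_nonempty by blast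
  qed
  ultimately show ?thesis
    using card_UN_disjoint[OF assms(1), of "\<lambda>j. components (P j)"] assms(5)
    by (simp add: subset_antisym)
qed

lemma path_segment_fun: "path (\<lambda>t. \<lambda>i. (1 - t) * x i + t * (y :: nat \<Rightarrow> real) i)"
  unfolding path_def by (intro continuous_intros)

lemma continuous_on_coordinate: "continuous_on X (\<lambda>x :: nat \<Rightarrow> real. x i)"
  by (rule continuous_on_subset[OF continuous_on_product_coordinates]) simp

lemma finite_components_hyperplane_complement:
  fixes S :: "(nat \<Rightarrow> real) set" and f :: "'k \<Rightarrow> (nat \<Rightarrow> real) \<Rightarrow> real"
  assumes "finite K"
    and convex: "\<And>x y t. x \<in> S \<Longrightarrow> y \<in> S \<Longrightarrow> 0 \<le> t \<Longrightarrow> t \<le> 1 \<Longrightarrow>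
      (\<lambda>i. (1 - t) * x i + t * y i) \<in> S"
    and affine: "\<And>k x y t. k \<in> K \<Longrightarrow>
      f k (\<lambda>i. (1 - t) * x i + t * y i) = (1 - t) * f k x + t * f k y"
  shows "finite (components {x \<in> S. \<forall>k\<in>K. f k x \<noteq> 0})"
proof -
  define cell where "cell P = {x \<in> S. \<forall>k\<in>K. f k x \<noteq> 0 \<and> (f k x > 0 \<longleftrightarrow> k \<in> P)}" for P
  have "{x \<in> S. \<forall>k\<in>K. f k x \<noteq> 0} = \<Union>(cell ` Pow K)"
    by (auto simp: cell_def)
  moreover have "path_connected (cell P)" for P
    unfolding path_connected_def
  proof (intro ballI)
    fix x y assume x: "x \<in> cell P" and y: "y \<in> cell P"
    let ?g = "\<lambda>t. \<lambda>i. (1 - t) * x i + t * y i"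
    have "?g t \<in> cell P" if t: "0 \<le> t" "t \<le> 1" for t
    proof -
      have "f k (?g t) \<noteq> 0 \<and> (f k (?g t) > 0 \<longleftrightarrow> k \<in> P)" if "k \<in> K" for k
      proof (cases "k \<in> P")
        case True
        then have "- f k x < 0" "- f k y < 0"
          using x y \<open>k \<in> K\<close> by (auto simp: cell_def)
        then have "(1 - t) * - f k x + t * - f k y < 0"
          using t by (intro convex_bound_lt) auto
        then show ?thesis
          using True affine[OF \<open>k \<in> K\<close>] by simp
      next
        case False
        then have "f k x < 0" "f k y < 0"
          using x y \<open>k \<in> K\<close> by (auto simp: cell_def linorder_neq_iff)
        then have "(1 - t) * f k x + t * f k y < 0"
          using t by (intro convex_bound_lt) auto
        then show ?thesis
          using False affine[OF \<open>k \<in> K\<close>] by simp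
      qed
      then show ?thesis
        using x y t convex by (auto simp: cell_def)
    qed
    then show "\<exists>g. path g \<and> path_image g \<subseteq> cell P \<and> pathstart g = x \<and> pathfinish g = y"
      by (intro exI[of _ ?g]) (auto simp: path_segment_fun path_image_def pathstart_def pathfinish_def)
  qed
  then have "connected X" if "X \<in> cell ` Pow K" for X
    using that path_connected_imp_connected by blast
  then have "finite (components (\<Union>(cell ` Pow K)))"
    using assms(1) by (simp add: finite_components_Union_connected)
  ultimately show ?thesis
    by simp
qed

definition C_compl_on :: "nat list \<Rightarrow> nat set \<Rightarrow> (nat \<Rightarrow> real) set" where
  "C_compl_on a I = {y. (\<forall>i. i \<notin> I \<longrightarrow> y i = 0) \<and>
     (\<forall>i\<in>I. \<forall>j\<in>I. i \<noteq> j \<longrightarrow>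
        y i \<noteq> y j \<and> (\<forall>r\<in>set a. y i - y j \<noteq> ln (real r) / ln (real (hd a))))}"

lemma C_compl_eq_C_compl_on: "C_compl a n = C_compl_on a {..<n}"
  unfolding C_compl_def C_compl_on_def Rn_def
  by (auto simp: not_less) (metis linorder_neqE_nat eq_iff_diff_eq_0)

lemma finite_components_C_compl_on:
  assumes "finite I"
  shows "finite (components (C_compl_on a I))"
proof -
  define K where "K = {(i, j, c). i \<in> I \<and> j \<in> I \<and> i \<noteq> j \<and>
    c \<in> insert 0 ((\<lambda>r. ln (real r) / ln (real (hd a))) ` set a)}"
  have "K \<subseteq> I \<times> I \<times> insert 0 ((\<lambda>r. ln (real r) / ln (real (hd a))) ` set a)"
    by (auto simp: K_def)
  then have "finite K"
    using assms finite_subset by blast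
  moreover have "C_compl_on a I =
      {y \<in> {y. \<forall>i. i \<notin> I \<longrightarrow> y i = 0}. \<forall>(i, j, c)\<in>K. y i - y j - c \<noteq> 0}"
    by (auto simp: C_compl_on_def K_def) (metis diff_self, blast)
  ultimately show ?thesis
    using finite_components_hyperplane_complement[of K "{y. \<forall>i. i \<notin> I \<longrightarrow> y i = 0}"
        "\<lambda>(i, j, c) y. y i - y j - c"]
    by (auto simp: algebra_simps split: prod.splits)
qed

lemma relabel_mem_C_compl_on:
  assumes "bij_betw h J I" "y \<in> C_compl_on a I"
  shows "(\<lambda>j. if j \<in> J then y (h j) else 0) \<in> C_compl_on a J"
  using assms bij_betw_apply[OF assms(1)]
  by (simp add: C_compl_on_def bij_betw_def inj_on_def) metis

lemma continuous_on_relabel: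
  "continuous_on S (\<lambda>y :: nat \<Rightarrow> real. \<lambda>j. if j \<in> J then y (h j) else 0)"
proof (intro continuous_on_coordinatewise_then_product)
  fix j
  show "continuous_on S (\<lambda>y :: nat \<Rightarrow> real. if j \<in> J then y (h j) else 0)"
    by (cases "j \<in> J") (simp_all add: continuous_on_coordinate)
qed

lemma C_compl_on_homeomorphic:
  assumes "bij_betw h J I"
  shows "C_compl_on a I homeomorphic C_compl_on a J"
proof -
  let ?h' = "inv_into J h"
  have h': "bij_betw ?h' I J"
    using assms by (rule bij_betw_inv_into)
  let ?f = "\<lambda>y. \<lambda>j. if j \<in> J then y (h j) else 0"
  let ?g = "\<lambda>z. \<lambda>i. if i \<in> I then z (?h' i) else 0"
  have "homeomorphism (C_compl_on a I) (C_compl_on a J) ?f ?g"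
  proof (rule homeomorphismI)
    show "?f ` C_compl_on a I \<subseteq> C_compl_on a J" "?g ` C_compl_on a J \<subseteq> C_compl_on a I"
      using relabel_mem_C_compl_on assms h' by blast+
    show "?g (?f y) = y" if "y \<in> C_compl_on a I" for y
      using that assms bij_betw_inv_into_right[OF assms] bij_betw_apply[OF h']
      by (auto simp: C_compl_on_def fun_eq_iff)
    show "?f (?g z) = z" if "z \<in> C_compl_on a J" for z
      using that assms bij_betw_inv_into_left[OF assms] bij_betw_apply[OF assms]
      by (auto simp: C_compl_on_def fun_eq_iff)
  qed (rule continuous_on_relabel)+
  then show ?thesis
    unfolding homeomorphic_def by blast
qed

lemma card_components_C_compl_on:
  assumes "finite I"
  shows "card (components (C_compl_on a I)) = num_regions (C_compl a (card I))"
proof -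
  obtain h where "bij_betw h {0..<card I} I"
    using ex_bij_betw_nat_finite[OF assms] by blast
  then have "C_compl_on a I homeomorphic C_compl a (card I)"
    using C_compl_on_homeomorphic by (simp add: C_compl_eq_C_compl_on atLeast0LessThan)
  then show ?thesis
    unfolding num_regions_def by (rule homeomorphic_components)
qed

definition avoids_A_on :: "nat list \<Rightarrow> nat set \<Rightarrow> (nat \<Rightarrow> real) \<Rightarrow> bool" where
  "avoids_A_on a I x \<longleftrightarrow>
     (\<forall>i\<in>I. \<forall>j\<in>I. i \<noteq> j \<longrightarrow> x i \<noteq> x j \<and> (\<forall>r\<in>set a. x i \<noteq> real r * x j))"

lemma A_compl_eq: "A_compl a n = {x \<in> Rn n. (\<forall>i<n. x i \<noteq> 0) \<and> avoids_A_on a {..<n} x}"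
  unfolding A_compl_def avoids_A_on_def by (auto, metis linorder_neqE_nat)

lemma avoids_A_on_cong:
  "(\<And>i. i \<in> I \<Longrightarrow> x i = y i) \<Longrightarrow> avoids_A_on a I x \<longleftrightarrow> avoids_A_on a I y"
  by (simp add: avoids_A_on_def)

lemma avoids_A_on_Un_signs:
  assumes "\<forall>i\<in>S. x i > 0" "\<forall>i\<in>T. x i < 0"
  shows "avoids_A_on a (S \<union> T) x \<longleftrightarrow> avoids_A_on a S x \<and> avoids_A_on a T (- x)"
proof -
  have "x i \<noteq> x j \<and> (\<forall>r\<in>set a. x i \<noteq> real r * x j)"
    if "i \<in> S \<and> j \<in> T \<or> i \<in> T \<and> j \<in> S" for i j
  proof -
    have neg: "x i * x j < 0"
      using that assms by (auto simp: mult_pos_neg mult_neg_pos)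
    show ?thesis
    proof (intro conjI ballI notI)
      assume "x i = x j"
      then show False
        using neg not_square_less_zero by metis
    next
      fix r assume "x i = real r * x j"
      then have "x i * x j = real r * (x j * x j)"
        by (simp add: mult.assoc)
      then show False
        using neg by (metis not_less of_nat_0_le_iff zero_le_mult_iff zero_le_square)
    qed
  qed
  then show ?thesis
    unfolding avoids_A_on_def by auto
qed

definition log_chart :: "real \<Rightarrow> nat set \<Rightarrow> (nat \<Rightarrow> real) \<Rightarrow> nat \<Rightarrow> real" where
  "log_chart L S x = (\<lambda>i. if i \<in> S then ln (x i) / L else 0)"

definition exp_chart :: "real \<Rightarrow> nat set \<Rightarrow> (nat \<Rightarrow> real) \<Rightarrow> nat \<Rightarrow> real" where
  "exp_chart L S y = (\<lambda>i. if i \<in> S then exp (L * y i) else 0)"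

lemma log_chart_mem_C_compl_on:
  assumes "a \<noteq> []" "\<forall>r\<in>set a. 2 \<le> r" "\<forall>i\<in>S. 0 < x i"
  shows "log_chart (ln (real (hd a))) S x \<in> C_compl_on a S \<longleftrightarrow> avoids_A_on a S x"
proof -
  define L where "L = ln (real (hd a))"
  have "2 \<le> hd a"
    using assms(1,2) hd_in_set by blast
  then have "L > 0"
    by (simp add: L_def)
  have ratio: "ln (x i) / L - ln (x j) / L = ln (real r) / L \<longleftrightarrow> x i = real r * x j"
    if "i \<in> S" "j \<in> S" "r \<in> set a" for i j r
  proof -
    have pos: "0 < x i" "0 < x j" "0 < real r"
      using that assms(2,3) by fastforce+
    have "x i = real r * x j \<longleftrightarrow> ln (x i) = ln (real r * x j)"
      using pos by simp
    also have "\<dots> \<longleftrightarrow> ln (x i) - ln (x j) = ln (real r)"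
      using pos by (auto simp: ln_mult)
    also have "\<dots> \<longleftrightarrow> (ln (x i) - ln (x j)) / L = ln (real r) / L"
      using \<open>L > 0\<close> by simp
    finally show ?thesis
      by (simp add: diff_divide_distrib)
  qed
  have "ln (x i) / L = ln (x j) / L \<longleftrightarrow> x i = x j" if "i \<in> S" "j \<in> S" for i j
    using that assms(3) \<open>L > 0\<close> by simp
  with ratio show ?thesis
    unfolding C_compl_on_def avoids_A_on_def log_chart_def L_def[symmetric] by auto
qed

lemma log_exp_chart: "L \<noteq> 0 \<Longrightarrow> y \<in> C_compl_on a S \<Longrightarrow> log_chart L S (exp_chart L S y) = y"
  by (auto simp: log_chart_def exp_chart_def C_compl_on_def fun_eq_iff)

lemma avoids_A_on_exp_chart:
  assumes "a \<noteq> []" "\<forall>r\<in>set a. 2 \<le> r" "y \<in> C_compl_on a S"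
  shows "avoids_A_on a S (exp_chart (ln (real (hd a))) S y)"
proof -
  have "2 \<le> hd a"
    using assms(1,2) hd_in_set by blast
  then have "ln (real (hd a)) \<noteq> 0"
    by simp
  then show ?thesis
    using log_chart_mem_C_compl_on[OF assms(1,2), of S "exp_chart (ln (real (hd a))) S y"]
      log_exp_chart assms(3) by (simp add: exp_chart_def)
qed

lemma continuous_on_log_chart:
  assumes "\<And>i. continuous_on X (\<lambda>x. \<phi> x i)" "\<And>x i. x \<in> X \<Longrightarrow> i \<in> S \<Longrightarrow> 0 < \<phi> x i"
  shows "continuous_on X (\<lambda>x. log_chart L S (\<phi> x))"
  unfolding log_chart_def
proof (intro continuous_on_coordinatewise_then_product)
  fix i
  show "continuous_on X (\<lambda>x. if i \<in> S then ln (\<phi> x i) / L else 0)"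
    using assms
    by (cases "i \<in> S") (auto simp: divide_inverse intro!: continuous_intros dest: less_imp_neq[symmetric])
qed

lemma continuous_on_exp_chart:
  assumes "continuous_on X (\<lambda>x. \<psi> x i)"
  shows "continuous_on X (\<lambda>x. exp_chart L S (\<psi> x) i)"
proof (cases "i \<in> S")
  case True
  then show ?thesis
    unfolding exp_chart_def using assms by (simp add: continuous_on_exp continuous_on_mult_left)
qed (simp add: exp_chart_def)

definition A_compl_orthant :: "nat list \<Rightarrow> nat \<Rightarrow> nat set \<Rightarrow> (nat \<Rightarrow> real) set" where
  "A_compl_orthant a n S = {x \<in> A_compl a n. \<forall>i<n. 0 < x i \<longleftrightarrow> i \<in> S}"

lemma A_compl_orthant_iff:
  assumes "S \<subseteq> {..<n}"
  shows "x \<in> A_compl_orthant a n S \<longleftrightarrow>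
    x \<in> Rn n \<and> (\<forall>i\<in>S. 0 < x i) \<and> (\<forall>i\<in>{..<n} - S. x i < 0) \<and>
    avoids_A_on a S x \<and> avoids_A_on a ({..<n} - S) (- x)"
proof -
  have n: "{..<n} = S \<union> ({..<n} - S)"
    using assms by blast
  have "(\<forall>i<n. x i \<noteq> 0) \<and> (\<forall>i<n. 0 < x i \<longleftrightarrow> i \<in> S) \<longleftrightarrow>
      (\<forall>i\<in>S. 0 < x i) \<and> (\<forall>i\<in>{..<n} - S. x i < 0)"
    using assms by (auto simp: linorder_neq_iff) (metis DiffI lessThan_iff less_asym)
  then show ?thesis
    using avoids_A_on_Un_signs[of S x "{..<n} - S" a] n
    unfolding A_compl_orthant_def A_compl_eq by auto
qed

lemma A_compl_orthant_homeomorphic: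
  assumes "a \<noteq> []" "\<forall>r\<in>set a. 2 \<le> r" "S \<subseteq> {..<n}"
  shows "A_compl_orthant a n S homeomorphic C_compl_on a S \<times> C_compl_on a ({..<n} - S)"
proof -
  define T where "T = {..<n} - S"
  define L where "L = ln (real (hd a))"
  have "2 \<le> hd a"
    using assms(1,2) hd_in_set by blast
  then have "L \<noteq> 0"
    by (simp add: L_def)
  have orthant: "x \<in> A_compl_orthant a n S \<longleftrightarrow> x \<in> Rn n \<and> (\<forall>i\<in>S. 0 < x i) \<and>
      (\<forall>i\<in>T. x i < 0) \<and> avoids_A_on a S x \<and> avoids_A_on a T (- x)" for x
    unfolding T_def by (rule A_compl_orthant_iff[OF assms(3)])
  note log_chart_mem = log_chart_mem_C_compl_on[OF assms(1,2), folded L_def]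
  note exp_chart_avoids = avoids_A_on_exp_chart[OF assms(1,2), folded L_def]
  define F where "F x = (log_chart L S x, log_chart L T (- x))" for x
  define G where "G p = (\<lambda>i. exp_chart L S (fst p) i - exp_chart L T (snd p) i)" for p
  have "S \<inter> T = {}" and outside: "\<And>i. i \<notin> S \<and> i \<notin> T \<longleftrightarrow> n \<le> i"
    using assms(3) by (auto simp: T_def)
  then have G_on_S: "\<And>p i. i \<in> S \<Longrightarrow> G p i = exp (L * fst p i)"
    and G_on_T: "\<And>p i. i \<in> T \<Longrightarrow> G p i = - exp (L * snd p i)"
    and G_outside: "\<And>p i. i \<notin> S \<Longrightarrow> i \<notin> T \<Longrightarrow> G p i = 0"
    by (auto simp: G_def exp_chart_def)
  have "homeomorphism (A_compl_orthant a n S) (C_compl_on a S \<times> C_compl_on a T) F G"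
  proof (rule homeomorphismI)
    show "continuous_on (A_compl_orthant a n S) F"
      unfolding F_def using orthant
      by (intro continuous_on_Pair continuous_on_log_chart) (auto intro: continuous_intros continuous_on_coordinate)
    have "continuous_on X (\<lambda>p. fst p i)" "continuous_on X (\<lambda>p. snd p i)"
      for X :: "((nat \<Rightarrow> real) \<times> (nat \<Rightarrow> real)) set" and i
      by (rule continuous_on_product_then_coordinatewise, intro continuous_intros)+
    then show "continuous_on (C_compl_on a S \<times> C_compl_on a T) G"
      unfolding G_def
      by (intro continuous_on_coordinatewise_then_product continuous_on_diff continuous_on_exp_chart)
    show "F ` A_compl_orthant a n S \<subseteq> C_compl_on a S \<times> C_compl_on a T"
      using orthant log_chart_mem by (auto simp: F_def)
    show "G ` (C_compl_on a S \<times> C_compl_on a T) \<subseteq> A_compl_orthant a n S"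
    proof clarify
      fix u v assume uv: "u \<in> C_compl_on a S" "v \<in> C_compl_on a T"
      have "avoids_A_on a S (G (u, v))"
        using exp_chart_avoids[OF uv(1)] avoids_A_on_cong[of S "G (u, v)" "exp_chart L S u"]
        by (simp add: G_on_S exp_chart_def)
      moreover have "avoids_A_on a T (- G (u, v))"
        using exp_chart_avoids[OF uv(2)] avoids_A_on_cong[of T "- G (u, v)" "exp_chart L T v"]
        by (simp add: G_on_T exp_chart_def)
      moreover have "G (u, v) \<in> Rn n"
        using G_outside outside unfolding Rn_def by blast
      moreover have "\<forall>i\<in>S. 0 < G (u, v) i" "\<forall>i\<in>T. G (u, v) i < 0"
        by (simp_all add: G_on_S G_on_T)
      ultimately show "G (u, v) \<in> A_compl_orthant a n S"
        using orthant by blast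
    qed
    show "G (F x) = x" if "x \<in> A_compl_orthant a n S" for x
    proof
      fix i
      have "x \<in> Rn n" "\<forall>i\<in>S. 0 < x i" "\<forall>i\<in>T. x i < 0"
        using that orthant by blast+
      then show "G (F x) i = x i"
        using \<open>L \<noteq> 0\<close> G_outside[of i] outside[of i]
        by (cases "i \<in> S"; cases "i \<in> T") (auto simp: G_on_S G_on_T F_def log_chart_def Rn_def)
    qed
    show "F (G p) = p" if "p \<in> C_compl_on a S \<times> C_compl_on a T" for p
    proof -
      have "log_chart L S (G p) = fst p" "log_chart L T (- G p) = snd p"
        using that \<open>L \<noteq> 0\<close> by (auto simp: log_chart_def G_on_S G_on_T C_compl_on_def fun_eq_iff)
      then show ?thesis
        by (simp add: F_def)
    qed
  qed
  then show ?thesis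
    unfolding T_def homeomorphic_def by blast
qed

lemma sum_Pow_card:
  fixes f :: "nat \<Rightarrow> 'a :: comm_semiring_1"
  assumes "finite A"
  shows "(\<Sum>S\<in>Pow A. f (card S)) = (\<Sum>i = 0..card A. of_nat (card A choose i) * f i)"
proof -
  have "card ` Pow A \<subseteq> {0..card A}"
    using assms card_mono by fastforce
  then have "(\<Sum>S\<in>Pow A. f (card S)) = (\<Sum>i = 0..card A. \<Sum>S\<in>{S \<in> Pow A. card S = i}. f (card S))"
    using sum.group[of "Pow A" "{0..card A}" card "\<lambda>S. f (card S)"] assms by simp
  also have "\<dots> = (\<Sum>i = 0..card A. of_nat (card {S \<in> Pow A. card S = i}) * f i)"
    by (intro sum.cong) simp_all
  also have "\<dots> = (\<Sum>i = 0..card A. of_nat (card A choose i) * f i)"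
    using n_subsets[OF assms] by simp
  finally show ?thesis .
qed

lemma open_sign_orthant: "open {x :: nat \<Rightarrow> real. \<forall>i<n. if i \<in> S then 0 < x i else x i < 0}"
proof -
  have "open (if i \<in> S then {x :: nat \<Rightarrow> real. 0 < x i} else {x. x i < 0})" for i
    by (auto intro!: open_Collect_less continuous_intros continuous_on_coordinate)
  then have "open (\<Inter>i<n. if i \<in> S then {x :: nat \<Rightarrow> real. 0 < x i} else {x. x i < 0})"
    by (intro open_INT) auto
  moreover have "{x :: nat \<Rightarrow> real. \<forall>i<n. if i \<in> S then 0 < x i else x i < 0} =
      (\<Inter>i<n. if i \<in> S then {x. 0 < x i} else {x. x i < 0})"
    by auto
  ultimately show ?thesis
    by simp
qed

lemma
  assumes "a \<noteq> []" "\<forall>r\<in>set a. 2 \<le> r" "S \<subseteq> {..<n}"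
  shows card_components_A_compl_orthant:
      "card (components (A_compl_orthant a n S)) =
        num_regions (C_compl a (card S)) * num_regions (C_compl a (n - card S))"
    and finite_components_A_compl_orthant: "finite (components (A_compl_orthant a n S))"
proof -
  have "finite S"
    using assms(3) finite_subset by blast
  then have fin: "finite S" "finite ({..<n} - S)" "card ({..<n} - S) = n - card S"
    using assms(3) by (simp_all add: card_Diff_subset)
  note hom = homeomorphic_components[OF A_compl_orthant_homeomorphic[OF assms]]
  show "card (components (A_compl_orthant a n S)) =
      num_regions (C_compl a (card S)) * num_regions (C_compl a (n - card S))"
    using fin by (simp add: hom card_components_Times card_components_C_compl_on)
  show "finite (components (A_compl_orthant a n S))"
    using fin by (simp add: hom finite_components_Times finite_components_C_compl_on)
qed

lemma num_regions_A_compl_sum_orthants: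
  assumes "a \<noteq> []" "\<forall>r\<in>set a. 2 \<le> r"
  shows "num_regions (A_compl a n) = (\<Sum>S\<in>Pow {..<n}. card (components (A_compl_orthant a n S)))"
  unfolding num_regions_def
proof (rule card_components_open_partition)
  have nonzero: "\<forall>i<n. x i \<noteq> 0" if "x \<in> A_compl a n" for x
    using that by (simp add: A_compl_def)
  fix S
  have "A_compl_orthant a n S =
      A_compl a n \<inter> {x. \<forall>i<n. if i \<in> S then 0 < x i else x i < 0}"
    using nonzero by (auto simp: A_compl_orthant_def linorder_neq_iff split: if_splits)
  then show "openin (top_of_set (A_compl a n)) (A_compl_orthant a n S)"
    by (simp add: openin_open_Int open_sign_orthant)
next
  show "disjoint_family_on (A_compl_orthant a n) (Pow {..<n})"
    unfolding disjoint_family_on_def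
  proof (intro ballI impI)
    fix S S' assume "S \<in> Pow {..<n}" "S' \<in> Pow {..<n}" "S \<noteq> S'"
    then obtain i where "i < n" "i \<in> S \<longleftrightarrow> i \<notin> S'"
      by blast
    then show "A_compl_orthant a n S \<inter> A_compl_orthant a n S' = {}"
      by (auto simp: A_compl_orthant_def)
  qed
  show "A_compl a n = (\<Union>S\<in>Pow {..<n}. A_compl_orthant a n S)"
  proof (intro equalityI subsetI)
    fix x assume "x \<in> A_compl a n"
    then have "x \<in> A_compl_orthant a n {i. i < n \<and> 0 < x i}"
      by (simp add: A_compl_orthant_def)
    then show "x \<in> (\<Union>S\<in>Pow {..<n}. A_compl_orthant a n S)"
      by auto
  qed (auto simp: A_compl_orthant_def)
  show "finite (components (A_compl_orthant a n S))" if "S \<in> Pow {..<n}" for S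
    using finite_components_A_compl_orthant assms that by blast
qed simp

theorem mainTheorem11:
  fixes a :: "nat list" and n :: nat
  assumes "a \<noteq> []" and "distinct a" and "\<forall>r \<in> set a. r \<ge> 2"
  shows "num_regions (A_compl a n) =
    (\<Sum>i = 0..n. (n choose i) * num_regions (C_compl a i) * num_regions (C_compl a (n - i)))"
proof -
  define c where "c k = num_regions (C_compl a k)" for k
  have "num_regions (A_compl a n) = (\<Sum>S\<in>Pow {..<n}. c (card S) * c (n - card S))"
    unfolding num_regions_A_compl_sum_orthants[OF assms(1,3)] c_def
    using card_components_A_compl_orthant[OF assms(1,3)] by (intro sum.cong) auto
  also have "\<dots> = (\<Sum>i = 0..n. (n choose i) * c i * c (n - i))"
    using sum_Pow_card[of "{..<n}" "\<lambda>k. c k * c (n - k)"] by (simp add: mult.assoc)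
  finally show ?thesis
    by (simp add: c_def)
qed

end
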